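(* For each integer $n \ge 2$ and real $\gamma$, let $\mathcal{L}_n(\gamma)$ be the infinite graph with vertex set $\mathbb{Z}^+ = \{1,2,3,\ldots\}$ in which the vertices $1,\ldots,n$ form a complete graph $K_n$, the vertices $n, n+1, n+2, \ldots$ form an infinite path (edges $\{k,k+1\}$ for all $k \ge n$), and vertex $1$ carries a self-loop of weight $\gamma$. Let $H$ be its adjacency operator on $\ell^2(\mathbb{Z}^+)$, i.e. the bounded self-adjoint operator with matrix entries (in the standard basis $\{e_j\}_{j\ge1}$) $\langle e_1, He_1\rangle=\gamma$, $\langle e_i, He_j\rangle = 1$ for distinct $i,j\in\{1,\ldots,n\}$, $\langle e_k, He_{k+1}\rangle=\langle e_{k+1}, He_k\rangle=1$ for $k\ge n$, and all other entries $0$. Let $z_1 = n^{-1/2}\sum_{j=1}^{n} e_j$. If $\gamma = n + \mathcal{O}(1)$, then for $t = \pi/(2\sqrt{n})$, \[ \left|\langle e_1, e^{-itH} z_1\rangle\right| = \Omega(1). \]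
   Context: Asymptotic notation refers to $n\to\infty$: $\gamma=\gamma_n$ with $\gamma_n - n$ bounded, and $\Omega(1)$ means bounded below by a positive constant for all sufficiently large $n$. The inner product is $\langle x,y\rangle=\sum_u \overline{x_u}y_u$. *)

theory Defs
  imports "HOL-Analysis.Analysis"
begin

text \<open>Matrix entries of the adjacency operator H of L_n(gamma) on l2(Z+), in the
standard basis e_1, e_2, ... (index 0 is not a vertex; all entries involving 0 vanish).\<close>
definition Hmat :: "nat \<Rightarrow> real \<Rightarrow> nat \<Rightarrow> nat \<Rightarrow> complex" where
  "Hmat n \<gamma> i j =
     (if i = 1 \<and> j = 1 then complex_of_real \<gamma>
      else if 1 \<le> i \<and> i \<le> n \<and> 1 \<le> j \<and> j \<le> n \<and> i \<noteq> j then 1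
      else if n \<le> i \<and> j = i + 1 then 1
      else if n \<le> j \<and> i = j + 1 then 1
      else 0)"

fun Hpow :: "nat \<Rightarrow> real \<Rightarrow> nat \<Rightarrow> nat \<Rightarrow> nat \<Rightarrow> complex" where
  "Hpow n \<gamma> 0 i j = (if i = j then 1 else 0)"
| "Hpow n \<gamma> (Suc k) i j = (\<Sum>\<^sub>\<infinity>l. Hmat n \<gamma> i l * Hpow n \<gamma> k l j)"

definition expH_entry :: "nat \<Rightarrow> real \<Rightarrow> real \<Rightarrow> nat \<Rightarrow> nat \<Rightarrow> complex" where
  "expH_entry n \<gamma> t i j = (\<Sum>k. ((- \<i> * complex_of_real t) ^ k / fact k) * Hpow n \<gamma> k i j)"

definition amplitude :: "nat \<Rightarrow> real \<Rightarrow> real \<Rightarrow> complex" where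
  "amplitude n \<gamma> t = (\<Sum>j\<in>{1..n}. complex_of_real (1 / sqrt (real n)) * expH_entry n \<gamma> t 1 j)"

end

theory Submission
  imports Defs
begin

text \<open>Up to the single edge \<open>{n, n + 1}\<close> leaving the clique, the span of \<open>e\<^sub>1\<close> and
  \<open>e\<^sub>2 + \<dots> + e\<^sub>n\<close> is invariant under \<open>H\<close>, which acts on it as a \<open>2 \<times> 2\<close> matrix. Solving
  that system explicitly gives a state whose \<open>e\<^sub>1\<close>-coefficient has modulus at least
  \<open>p |sin (\<omega> t)|\<close>, where \<open>\<omega>\<close> and \<open>p\<close> are both of order \<open>\<surd>n\<close> when \<open>\<gamma> = n + O(1)\<close>;
  at \<open>t = \<pi> / (2 \<surd>n)\<close> this is of order \<open>\<surd>n\<close>. The true evolution differs from this state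
  by an error that is fed only through the edge \<open>{n, n + 1}\<close>, by a source of bounded size,
  so an energy estimate keeps it bounded for \<open>t \<le> 1\<close>. Dividing by the normalisation
  \<open>\<surd>n\<close> of \<open>z\<^sub>1\<close> leaves an amplitude bounded below. To differentiate the evolution, \<open>H\<close>
  is truncated to finitely many vertices, which by finite propagation speed changes the
  amplitude arbitrarily little.\<close>

section \<open>Exponential series\<close>

definition expi_series :: "(nat \<Rightarrow> complex) \<Rightarrow> real \<Rightarrow> complex" where
  "expi_series Z s = (\<Sum>k. (- \<i> * complex_of_real s) ^ k / fact k * Z k)"

lemma summable_exp_weighted:
  fixes Z :: "nat \<Rightarrow> complex" and z :: complex
  assumes "\<And>k. cmod (Z k) \<le> K * C ^ k" "C \<ge> 0"
  shows "summable (\<lambda>k. z ^ k / fact k * Z k)"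
proof (rule summable_comparison_test)
  show "\<exists>N. \<forall>k\<ge>N. norm (z ^ k / fact k * Z k) \<le> K * (inverse (fact k) * (cmod z * C) ^ k)"
  proof (intro exI allI impI)
    fix k :: nat
    have "norm (z ^ k / fact k * Z k) = cmod z ^ k / fact k * cmod (Z k)"
      by (simp add: norm_mult norm_divide norm_power)
    also have "\<dots> \<le> cmod z ^ k / fact k * (K * C ^ k)"
      by (rule mult_left_mono[OF assms(1)]) simp
    also have "\<dots> = K * (inverse (fact k) * (cmod z * C) ^ k)"
      by (simp add: power_mult_distrib field_simps)
    finally show "norm (z ^ k / fact k * Z k) \<le> K * (inverse (fact k) * (cmod z * C) ^ k)" .
  qed
  show "summable (\<lambda>k. K * (inverse (fact k) * (cmod z * C) ^ k))"
    by (intro summable_mult summable_exp)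
qed

lemma expi_series_0 [simp]: "expi_series Z 0 = Z 0"
  unfolding expi_series_def by (subst suminf_finite[of "{0}"]) auto

lemma expi_series_has_vector_derivative:
  fixes Z :: "nat \<Rightarrow> complex"
  assumes "\<And>k. cmod (Z k) \<le> K * C ^ k" "C \<ge> 0"
  shows "(expi_series Z has_vector_derivative (- \<i> * expi_series (\<lambda>k. Z (Suc k)) s)) (at s)"
proof -
  define c where "c k = Z k / fact k" for k
  have "((\<lambda>z. \<Sum>k. c k * z ^ k) has_field_derivative (\<Sum>k. diffs c k * z ^ k)) (at z)" for z
  proof (rule termdiffs_strong_converges_everywhere)
    show "summable (\<lambda>k. c k * y ^ k)" for y :: complex
      using summable_exp_weighted[OF assms, of y] by (simp add: c_def field_simps)
  qed
  moreover have "(\<lambda>z. \<Sum>k. c k * z ^ k) = (\<lambda>z. \<Sum>k. z ^ k / fact k * Z k)"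
    by (simp add: c_def field_simps)
  moreover have "(\<Sum>k. diffs c k * z ^ k) = (\<Sum>k. z ^ k / fact k * Z (Suc k))" for z
    by (simp add: diffs_def c_def field_simps del: of_nat_Suc)
  ultimately have outer: "((\<lambda>z. \<Sum>k. z ^ k / fact k * Z k) has_field_derivative
      (\<Sum>k. z ^ k / fact k * Z (Suc k))) (at z)" for z
    by metis
  have inner: "((\<lambda>s. - \<i> * complex_of_real s) has_vector_derivative - \<i>) (at s)"
    by (rule has_vector_derivative_real_field) (auto intro!: derivative_eq_intros)
  show ?thesis
    unfolding expi_series_def using field_vector_diff_chain_at[OF inner outer] by (simp add: o_def)
qed

lemma expi_series_linear_system_has_vector_derivative:
  fixes Y :: "nat \<Rightarrow> nat \<Rightarrow> complex"
  assumes rec: "\<And>k i. Y (Suc k) i = (\<Sum>l\<le>M. A i l * Y k l)"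
    and bound: "\<And>k i. cmod (Y k i) \<le> K * C ^ k" and "C \<ge> 0"
  shows "((\<lambda>s. expi_series (\<lambda>k. Y k i) s) has_vector_derivative
           (- \<i> * (\<Sum>l\<le>M. A i l * expi_series (\<lambda>k. Y k l) s))) (at s)"
proof -
  let ?z = "- \<i> * complex_of_real s"
  have summ: "summable (\<lambda>k. ?z ^ k / fact k * Y k l)" for l
    using summable_exp_weighted[OF bound \<open>C \<ge> 0\<close>] .
  have "expi_series (\<lambda>k. Y (Suc k) i) s = (\<Sum>k. \<Sum>l\<le>M. A i l * (?z ^ k / fact k * Y k l))"
    unfolding expi_series_def rec by (simp only: sum_distrib_left mult.left_commute)
  also have "\<dots> = (\<Sum>l\<le>M. \<Sum>k. A i l * (?z ^ k / fact k * Y k l))"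
    by (rule suminf_sum) (intro summable_mult summ)
  also have "\<dots> = (\<Sum>l\<le>M. A i l * expi_series (\<lambda>k. Y k l) s)"
    unfolding expi_series_def by (intro sum.cong refl suminf_mult summ)
  finally have eq: "expi_series (\<lambda>k. Y (Suc k) i) s = (\<Sum>l\<le>M. A i l * expi_series (\<lambda>k. Y k l) s)" .
  from expi_series_has_vector_derivative[of "\<lambda>k. Y k i" K C s, OF bound \<open>C \<ge> 0\<close>]
  show ?thesis unfolding eq .
qed

lemma expi_series_close:
  assumes "\<epsilon> > 0" "C \<ge> 0"
  obtains P where
    "\<And>Z W. (\<And>k. cmod (Z k) \<le> K * C ^ k) \<Longrightarrow> (\<And>k. cmod (W k) \<le> K * C ^ k) \<Longrightarrow>
       (\<And>k. k < P \<Longrightarrow> Z k = W k) \<Longrightarrow> cmod (expi_series Z s - expi_series W s) \<le> \<epsilon>"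
proof -
  define b where "b k = 2 * K * (inverse (fact k) * (\<bar>s\<bar> * C) ^ k)" for k
  have b: "summable b" unfolding b_def by (intro summable_mult summable_exp)
  obtain P where P: "norm (\<Sum>i. b (i + P)) < \<epsilon>"
    using suminf_exist_split[OF \<open>\<epsilon> > 0\<close> b] by blast
  show ?thesis
  proof (rule that)
    fix Z W :: "nat \<Rightarrow> complex"
    assume Z: "\<And>k. cmod (Z k) \<le> K * C ^ k" and W: "\<And>k. cmod (W k) \<le> K * C ^ k"
      and ZW: "\<And>k. k < P \<Longrightarrow> Z k = W k"
    let ?z = "- \<i> * complex_of_real s"
    define D where "D k = ?z ^ k / fact k * Z k - ?z ^ k / fact k * W k" for k
    have Db: "norm (D k) \<le> b k" for k
    proof -
      have "cmod (Z k - W k) \<le> 2 * K * C ^ k"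
        using norm_triangle_ineq4[of "Z k" "W k"] Z[of k] W[of k] by linarith
      then have "\<bar>s\<bar> ^ k / fact k * cmod (Z k - W k) \<le> \<bar>s\<bar> ^ k / fact k * (2 * K * C ^ k)"
        by (rule mult_left_mono) simp
      moreover have "norm (D k) = \<bar>s\<bar> ^ k / fact k * cmod (Z k - W k)"
        unfolding D_def right_diff_distrib[symmetric] by (simp add: norm_mult norm_divide norm_power)
      ultimately show ?thesis by (simp add: b_def power_mult_distrib divide_inverse mult_ac)
    qed
    have D: "summable D" by (rule summable_comparison_test'[OF b Db])
    have "expi_series Z s - expi_series W s = suminf D"
      unfolding expi_series_def D_def
      using summable_exp_weighted[OF Z \<open>C \<ge> 0\<close>] summable_exp_weighted[OF W \<open>C \<ge> 0\<close>]
      by (rule suminf_diff)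
    also have "\<dots> = (\<Sum>i. D (i + P))"
    proof -
      have "(\<Sum>i<P. D i) = 0" using ZW by (simp add: D_def)
      then show ?thesis using suminf_minus_initial_segment[OF D, of P] by simp
    qed
    finally have "cmod (expi_series Z s - expi_series W s) \<le> (\<Sum>i. b (i + P))"
      using Db summable_ignore_initial_segment[OF b] by (simp add: norm_suminf_le)
    then show "cmod (expi_series Z s - expi_series W s) \<le> \<epsilon>"
      using P by simp
  qed
qed

section \<open>Energy estimate for a Hermitian system with a source\<close>

lemma neg_two_Re_mult_le: "- 2 * Re (z * w) \<le> (cmod z)\<^sup>2 + (cmod w)\<^sup>2"
proof -
  have "- Re (z * w) \<le> cmod z * cmod w"
    using abs_Re_le_cmod[of "z * w"] by (simp add: norm_mult)
  moreover have "2 * (cmod z * cmod w) \<le> (cmod z)\<^sup>2 + (cmod w)\<^sup>2"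
    using sum_squares_bound[of "cmod z" "cmod w"] by (simp add: power2_eq_square)
  ultimately show ?thesis by linarith
qed

lemma hermitian_system_norm_has_derivative:
  fixes V :: "real \<Rightarrow> nat \<Rightarrow> complex" and H :: "nat \<Rightarrow> nat \<Rightarrow> complex"
  assumes herm: "\<And>i l. cnj (H i l) = H l i" and "K \<le> M"
    and V': "\<And>i. ((\<lambda>s. V s i) has_vector_derivative
                   (- \<i> * (\<Sum>l\<le>M. H i l * V s l) - (if i = K then r else 0))) (at s)"
  shows "((\<lambda>s. \<Sum>i\<le>M. (cmod (V s i))\<^sup>2) has_real_derivative - 2 * Re (cnj (V s K) * r)) (at s)"
proof -
  define W where "W i = - \<i> * (\<Sum>l\<le>M. H i l * V s l) - (if i = K then r else 0)" for i
  define S where "S = (\<Sum>i\<le>M. \<Sum>l\<le>M. H i l * V s l * cnj (V s i))"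
  have "cnj S = (\<Sum>i\<le>M. \<Sum>l\<le>M. H l i * V s i * cnj (V s l))"
    unfolding S_def by (simp add: herm mult_ac)
  also have "\<dots> = S"
    unfolding S_def by (rule sum.swap)
  finally have "Im S = 0"
    by (metis Reals_cnj_iff complex_is_Real_iff)
  have T: "(\<Sum>i\<le>M. W i * cnj (V s i)) = - \<i> * S - r * cnj (V s K)"
    using \<open>K \<le> M\<close>
    by (simp add: W_def S_def left_diff_distrib sum_subtractf sum_distrib_left sum_distrib_right
        mult.assoc if_distrib[of "\<lambda>x. x * _"] cong: if_cong)
  have "(\<Sum>i\<le>M. V s i * cnj (W i) + W i * cnj (V s i))
      = cnj (\<Sum>i\<le>M. W i * cnj (V s i)) + (\<Sum>i\<le>M. W i * cnj (V s i))"
    by (simp add: sum.distrib mult.commute)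
  then have "Re (\<Sum>i\<le>M. V s i * cnj (W i) + W i * cnj (V s i)) = - 2 * Re (cnj (V s K) * r)"
    unfolding T using \<open>Im S = 0\<close> by (simp add: mult.commute)
  moreover have "((\<lambda>s. Re (\<Sum>i\<le>M. V s i * cnj (V s i))) has_real_derivative
      Re (\<Sum>i\<le>M. V s i * cnj (W i) + W i * cnj (V s i))) (at s)"
    unfolding W_def by (intro has_field_derivative_Re has_vector_derivative_sum
        has_vector_derivative_mult has_vector_derivative_cnj V')
  moreover have "(cmod z)\<^sup>2 = Re (z * cnj z)" for z
    by (simp add: cmod_power2 flip: power2_eq_square)
  ultimately show ?thesis by simp
qed

lemma DERIV_le_self_plus_const_imp_le:
  fixes f f' :: "real \<Rightarrow> real"
  assumes "f 0 = 0" "t \<ge> 0"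
    and f': "\<And>x. 0 \<le> x \<Longrightarrow> x \<le> t \<Longrightarrow> (f has_real_derivative f' x) (at x)"
    and f'_le: "\<And>x. 0 \<le> x \<Longrightarrow> x \<le> t \<Longrightarrow> f' x \<le> f x + c"
  shows "f t \<le> c * (exp t - 1)"
proof -
  define Q where "Q s = (f s + c) * exp (- s)" for s
  have "Q t \<le> Q 0"
  proof (rule DERIV_nonpos_imp_nonincreasing[OF \<open>t \<ge> 0\<close>])
    fix x assume x: "0 \<le> x" "x \<le> t"
    have "(Q has_real_derivative (f' x - (f x + c)) * exp (- x)) (at x)"
      unfolding Q_def using f'[OF x] by (auto intro!: derivative_eq_intros simp: algebra_simps)
    moreover have "(f' x - (f x + c)) * exp (- x) \<le> 0"
      using f'_le[OF x] by (simp add: mult_nonpos_nonneg)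
    ultimately show "\<exists>y. (Q has_real_derivative y) (at x) \<and> y \<le> 0" by blast
  qed
  then have "(f t + c) * exp (- t) * exp t \<le> c * exp t"
    unfolding Q_def using \<open>f 0 = 0\<close> by (simp add: mult_right_mono)
  moreover have "(f t + c) * exp (- t) * exp t = f t + c"
    by (simp add: mult.assoc flip: exp_add)
  ultimately show ?thesis by (simp add: algebra_simps)
qed

section \<open>An explicitly solvable two-dimensional system\<close>

definition osc :: "complex \<Rightarrow> complex \<Rightarrow> complex \<Rightarrow> complex \<Rightarrow> complex" where
  "osc m w p z = exp (- \<i> * m * z) * (cos (w * z) - \<i> * p * sin (w * z))"

lemma osc_0 [simp]: "osc m w p 0 = 1"
  by (simp add: osc_def)

text \<open>For \<open>K = [[d, a], [b, -d]]\<close> one has \<open>K\<^sup>2 = w\<^sup>2 I\<close>, hence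
  \<open>exp (-izK) = cos (wz) I - i sin (wz) K / w\<close>; applied to \<open>(1, 1)\<close> and multiplied by
  \<open>exp (-imz)\<close> this gives the solution \<open>(osc m w p, osc m w q)\<close> of \<open>y' = -i (m I + K) y\<close>.\<close>
lemma osc_pair_has_field_derivative:
  fixes m d a b w p q :: complex
  assumes "w \<noteq> 0" "w\<^sup>2 = d\<^sup>2 + a * b" "p * w = d + a" "q * w = b - d"
  shows "(osc m w p has_field_derivative - \<i> * ((m + d) * osc m w p z + a * osc m w q z)) (at z)"
    and "(osc m w q has_field_derivative - \<i> * (b * osc m w p z + (m - d) * osc m w q z)) (at z)"
proof -
  have deriv: "(osc m w c has_field_derivative
      exp (- \<i> * m * z) * (- \<i> * m * (cos (w * z) - \<i> * c * sin (w * z))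
                         - w * sin (w * z) - \<i> * c * w * cos (w * z))) (at z)" for c
    unfolding osc_def[abs_def] by (auto intro!: derivative_eq_intros simp: algebra_simps)
  have "(d * p + a * q) * w = w * w" "(b * p - d * q) * w = w * w"
    using assms(2-4) unfolding power2_eq_square by algebra+
  then have pq: "d * p + a * q = w" "b * p - d * q = w"
    using \<open>w \<noteq> 0\<close> by simp_all
  have ii: "\<i> * \<i> = (-1::complex)" by simp
  show "(osc m w p has_field_derivative - \<i> * ((m + d) * osc m w p z + a * osc m w q z)) (at z)"
    by (rule DERIV_cong[OF deriv]) (use assms(3) pq ii in \<open>simp add: osc_def; algebra\<close>)
  show "(osc m w q has_field_derivative - \<i> * (b * osc m w p z + (m - d) * osc m w q z)) (at z)"
    by (rule DERIV_cong[OF deriv]) (use assms(4) pq ii in \<open>simp add: osc_def; algebra\<close>)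
qed

lemma norm_osc_of_real_sq:
  "(cmod (osc (of_real m) (of_real w) (of_real p) (of_real s)))\<^sup>2 = (cos (w * s))\<^sup>2 + (p * sin (w * s))\<^sup>2"
proof -
  have "cmod (exp (- \<i> * of_real m * of_real s)) = 1"
    using norm_exp_i_times[of "- (m * s)"] by (simp add: mult.assoc)
  moreover have "osc (of_real m) (of_real w) (of_real p) (of_real s)
      = exp (- \<i> * of_real m * of_real s) * Complex (cos (w * s)) (- (p * sin (w * s)))"
    by (simp add: osc_def complex_eq_iff cos_of_real sin_of_real flip: of_real_mult)
  ultimately show ?thesis by (simp add: norm_mult cmod_power2)
qed

lemma sin_ge_half: "pi / 6 \<le> x \<Longrightarrow> x \<le> 5 * pi / 6 \<Longrightarrow> 1 / 2 \<le> sin x"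
proof -
  assume "pi / 6 \<le> x" "x \<le> 5 * pi / 6"
  then have "\<bar>pi / 2 - x\<bar> \<le> pi / 3"
    by linarith
  then have "cos (pi / 3) \<le> cos \<bar>pi / 2 - x\<bar>"
    by (intro cos_monotone_0_pi_le) auto
  then show ?thesis
    by (simp add: cos_60 sin_cos_eq)
qed

section \<open>The graph \<open>L\<^sub>n(\<gamma>)\<close>\<close>

locale loop_clique =
  fixes n :: nat and \<gamma> :: real
  assumes two_le_n: "2 \<le> n"
begin

abbreviation H :: "nat \<Rightarrow> nat \<Rightarrow> complex" where
  "H \<equiv> Hmat n \<gamma>"

definition row_bound :: real where
  "row_bound = \<bar>\<gamma>\<bar> + real n + 2"

lemma row_bound_nonneg: "0 \<le> row_bound"
  by (simp add: row_bound_def)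

lemma Hmat_eq_0_beyond: "max n (i + 1) < l \<Longrightarrow> H i l = 0"
  by (auto simp: Hmat_def)

lemma Hpow_Suc_finite: "Hpow n \<gamma> (Suc k) i j = (\<Sum>l\<le>max n (i + 1). H i l * Hpow n \<gamma> k l j)"
proof -
  have "Hpow n \<gamma> (Suc k) i j = infsum (\<lambda>l. H i l * Hpow n \<gamma> k l j) {..max n (i + 1)}"
    unfolding Hpow.simps by (rule infsum_cong_neutral) (simp_all add: Hmat_eq_0_beyond not_le)
  then show ?thesis by simp
qed

lemma sum_norm_Hmat_row_le: "(\<Sum>l\<le>L. cmod (H i l)) \<le> row_bound"
proof -
  let ?count = "\<lambda>A. real (card ({..L} \<inter> A))"
  have "(\<Sum>l\<le>L. cmod (H i l)) \<le> (\<Sum>l\<le>L. \<bar>\<gamma>\<bar> * of_bool (l \<in> {1}) + of_bool (l \<in> {1..n})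
      + of_bool (l \<in> {i + 1}) + of_bool (l \<in> {i - 1}))"
    by (intro sum_mono) (auto simp: Hmat_def)
  also have "\<dots> = \<bar>\<gamma>\<bar> * ?count {1} + ?count {1..n} + ?count {i + 1} + ?count {i - 1}"
    by (simp only: sum.distrib sum_of_bool_eq finite_atMost Collect_mem_eq flip: sum_distrib_left)
  also have "\<dots> \<le> \<bar>\<gamma>\<bar> * card {1::nat} + card {1..n} + card {i + 1} + card {i - 1}"
    by (intro add_mono mult_left_mono of_nat_mono card_mono) auto
  finally show ?thesis by (simp add: row_bound_def)
qed

lemma norm_Hpow_le: "cmod (Hpow n \<gamma> k i j) \<le> row_bound ^ k"
proof (induction k arbitrary: i)
  case 0
  then show ?case by simp
next
  case (Suc k)
  have "cmod (Hpow n \<gamma> (Suc k) i j) \<le> (\<Sum>l\<le>max n (i + 1). cmod (H i l) * row_bound ^ k)"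
    unfolding Hpow_Suc_finite
    by (rule order_trans[OF norm_sum], intro sum_mono)
       (simp add: norm_mult mult_left_mono Suc.IH)
  also have "\<dots> \<le> row_bound * row_bound ^ k"
    unfolding sum_distrib_right[symmetric]
    by (intro mult_right_mono sum_norm_Hmat_row_le) (simp add: row_bound_nonneg)
  finally show ?case by simp
qed

definition clique_ind :: "nat \<Rightarrow> complex" where
  "clique_ind i = (if 1 \<le> i \<and> i \<le> n then 1 else 0)"

definition Hpow_clique :: "nat \<Rightarrow> nat \<Rightarrow> complex" where
  "Hpow_clique k i = (\<Sum>j\<in>{1..n}. Hpow n \<gamma> k i j)"

lemma Hpow_clique_0: "Hpow_clique 0 i = clique_ind i"
  by (simp add: Hpow_clique_def clique_ind_def)

lemma Hpow_clique_Suc: "Hpow_clique (Suc k) i = (\<Sum>l\<le>max n (i + 1). H i l * Hpow_clique k l)"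
  unfolding Hpow_clique_def Hpow_Suc_finite sum_distrib_left by (rule sum.swap)

lemma norm_Hpow_clique_le: "cmod (Hpow_clique k i) \<le> real n * row_bound ^ k"
proof -
  have "cmod (Hpow_clique k i) \<le> (\<Sum>j\<in>{1..n}. row_bound ^ k)"
    unfolding Hpow_clique_def by (rule order_trans[OF norm_sum sum_mono]) (rule norm_Hpow_le)
  then show ?thesis by simp
qed

lemma amplitude_eq_expi_series:
  "amplitude n \<gamma> t = complex_of_real (1 / sqrt (real n)) * expi_series (\<lambda>k. Hpow_clique k 1) t"
proof -
  have "summable (\<lambda>k. ((- \<i> * complex_of_real t) ^ k / fact k) * Hpow n \<gamma> k 1 j)" for j
    using summable_exp_weighted[of _ 1 row_bound] norm_Hpow_le row_bound_nonneg by simp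
  then have "expi_series (\<lambda>k. Hpow_clique k 1) t = (\<Sum>j\<in>{1..n}. expH_entry n \<gamma> t 1 j)"
    unfolding expi_series_def Hpow_clique_def expH_entry_def sum_distrib_left
    by (rule suminf_sum)
  then show ?thesis
    unfolding amplitude_def by (simp add: sum_distrib_left)
qed

definition Htrunc :: "nat \<Rightarrow> nat \<Rightarrow> nat \<Rightarrow> complex" where
  "Htrunc M i l = (if i \<le> M \<and> l \<le> M then H i l else 0)"

fun Htrunc_pow_clique :: "nat \<Rightarrow> nat \<Rightarrow> nat \<Rightarrow> complex" where
  "Htrunc_pow_clique M 0 i = clique_ind i"
| "Htrunc_pow_clique M (Suc k) i = (\<Sum>l\<le>M. Htrunc M i l * Htrunc_pow_clique M k l)"

lemma norm_Htrunc_pow_clique_le: "cmod (Htrunc_pow_clique M k i) \<le> row_bound ^ k"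
proof (induction k arbitrary: i)
  case 0
  then show ?case by (simp add: clique_ind_def)
next
  case (Suc k)
  have "cmod (Htrunc_pow_clique M (Suc k) i) \<le> (\<Sum>l\<le>M. cmod (Htrunc M i l) * row_bound ^ k)"
    by (simp, rule order_trans[OF norm_sum], intro sum_mono)
       (simp add: norm_mult mult_left_mono Suc.IH)
  also have "\<dots> \<le> (\<Sum>l\<le>M. cmod (H i l)) * row_bound ^ k"
    unfolding sum_distrib_right[symmetric]
    by (intro mult_right_mono sum_mono) (simp_all add: Htrunc_def row_bound_nonneg)
  also have "\<dots> \<le> row_bound * row_bound ^ k"
    by (intro mult_right_mono sum_norm_Hmat_row_le) (simp add: row_bound_nonneg)
  finally show ?case by simp
qed

text \<open>Finite propagation speed: beyond the clique, \<open>H\<close> only couples neighbouring vertices.\<close>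
lemma Htrunc_pow_clique_eq:
  assumes "n \<le> M"
  shows "max i n + k \<le> M \<Longrightarrow> Htrunc_pow_clique M k i = Hpow_clique k i"
proof (induction k arbitrary: i)
  case 0
  then show ?case by (simp add: Hpow_clique_0)
next
  case (Suc k)
  have "Htrunc_pow_clique M (Suc k) i = (\<Sum>l\<le>M. H i l * Htrunc_pow_clique M k l)"
    unfolding Htrunc_pow_clique.simps using Suc.prems by (intro sum.cong) (auto simp: Htrunc_def)
  also have "\<dots> = (\<Sum>l\<le>max n (i + 1). H i l * Htrunc_pow_clique M k l)"
    using Suc.prems by (intro sum.mono_neutral_right) (auto simp: Hmat_eq_0_beyond not_le)
  also have "\<dots> = (\<Sum>l\<le>max n (i + 1). H i l * Hpow_clique k l)"
    using Suc.prems \<open>n \<le> M\<close> by (intro sum.cong refl arg_cong2[where f = "(*)"] Suc.IH) auto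
  finally show ?case by (simp add: Hpow_clique_Suc)
qed

definition trunc_state :: "nat \<Rightarrow> real \<Rightarrow> nat \<Rightarrow> complex" where
  "trunc_state M s i = expi_series (\<lambda>k. Htrunc_pow_clique M k i) s"

lemma trunc_state_has_vector_derivative:
  "((\<lambda>s. trunc_state M s i) has_vector_derivative
     (- \<i> * (\<Sum>l\<le>M. Htrunc M i l * trunc_state M s l))) (at s)"
  unfolding trunc_state_def
  by (rule expi_series_linear_system_has_vector_derivative[where K = 1 and C = row_bound])
     (simp_all add: norm_Htrunc_pow_clique_le row_bound_nonneg)

lemma trunc_state_approx:
  assumes "\<epsilon> > 0"
  obtains M where "n + 1 \<le> M"
    and "cmod (expi_series (\<lambda>k. Hpow_clique k 1) t - trunc_state M t 1) \<le> \<epsilon>"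
proof -
  obtain P where P: "\<And>Z W. (\<And>k. cmod (Z k) \<le> real n * row_bound ^ k) \<Longrightarrow>
      (\<And>k. cmod (W k) \<le> real n * row_bound ^ k) \<Longrightarrow> (\<And>k. k < P \<Longrightarrow> Z k = W k) \<Longrightarrow>
      cmod (expi_series Z t - expi_series W t) \<le> \<epsilon>"
    using expi_series_close[OF assms row_bound_nonneg] by blast
  define M where "M = n + P + 1"
  have "cmod (Htrunc_pow_clique M k 1) \<le> real n * row_bound ^ k" for k
    using norm_Htrunc_pow_clique_le[of M k 1] mult_right_mono[of 1 "real n" "row_bound ^ k"]
      two_le_n row_bound_nonneg by simp
  then have "cmod (expi_series (\<lambda>k. Hpow_clique k 1) t - trunc_state M t 1) \<le> \<epsilon>"
    unfolding trunc_state_def using two_le_n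
    by (intro P norm_Hpow_clique_le) (simp_all add: Htrunc_pow_clique_eq M_def)
  then show ?thesis
    using that[of M] by (simp add: M_def)
qed

text \<open>\<open>H\<close> acts on the coefficients of \<open>e\<^sub>1\<close> and of \<open>e\<^sub>2 + \<dots> + e\<^sub>n\<close> by
  \<open>[[\<gamma>, n - 1], [1, n - 2]] = clique_shift I + [[d, n - 1], [1, -d]]\<close> with
  \<open>d = clique_detuning\<close>, up to the leak into the path.\<close>
definition clique_shift :: real where
  "clique_shift = (\<gamma> + real n - 2) / 2"

definition clique_detuning :: real where
  "clique_detuning = (\<gamma> - real n + 2) / 2"

definition clique_freq :: real where
  "clique_freq = sqrt (clique_detuning\<^sup>2 + real n - 1)"

definition clique_coeff_A :: real where
  "clique_coeff_A = (clique_detuning + real n - 1) / clique_freq"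

definition clique_coeff_B :: real where
  "clique_coeff_B = (1 - clique_detuning) / clique_freq"

definition clique_A :: "real \<Rightarrow> complex" where
  "clique_A s = osc (of_real clique_shift) (of_real clique_freq) (of_real clique_coeff_A) (of_real s)"

definition clique_B :: "real \<Rightarrow> complex" where
  "clique_B s = osc (of_real clique_shift) (of_real clique_freq) (of_real clique_coeff_B) (of_real s)"

definition clique_state :: "real \<Rightarrow> nat \<Rightarrow> complex" where
  "clique_state s i = (if i = 1 then clique_A s else if 2 \<le> i \<and> i \<le> n then clique_B s else 0)"

lemma clique_freq_radicand_pos: "0 < clique_detuning\<^sup>2 + real n - 1"
  using two_le_n zero_le_power2[of clique_detuning] by linarith

lemma clique_freq_sq: "clique_freq\<^sup>2 = clique_detuning\<^sup>2 + real n - 1"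
  using clique_freq_radicand_pos by (simp add: clique_freq_def)

lemma clique_freq_pos: "0 < clique_freq"
  using clique_freq_radicand_pos by (simp add: clique_freq_def)

lemma clique_A_B_has_vector_derivative:
  "((\<lambda>s. clique_A s) has_vector_derivative
      - \<i> * (of_real \<gamma> * clique_A s + (of_nat n - 1) * clique_B s)) (at s)"
  "((\<lambda>s. clique_B s) has_vector_derivative
      - \<i> * (clique_A s + (of_nat n - 2) * clique_B s)) (at s)"
proof -
  let ?d = "complex_of_real clique_detuning" and ?m = "complex_of_real clique_shift"
    and ?w = "complex_of_real clique_freq"
  have "?w \<noteq> 0"
    using clique_freq_pos by simp
  moreover have "?w\<^sup>2 = ?d\<^sup>2 + (of_nat n - 1) * 1"
    using arg_cong[OF clique_freq_sq, of complex_of_real] by simp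
  moreover have "of_real clique_coeff_A * ?w = ?d + (of_nat n - 1)"
    "of_real clique_coeff_B * ?w = 1 - ?d"
    using clique_freq_pos by (simp_all add: clique_coeff_A_def clique_coeff_B_def flip: of_real_mult)
  ultimately have osc: "(osc ?m ?w (of_real clique_coeff_A) has_field_derivative
      - \<i> * ((?m + ?d) * osc ?m ?w (of_real clique_coeff_A) (of_real s)
              + (of_nat n - 1) * osc ?m ?w (of_real clique_coeff_B) (of_real s))) (at (of_real s))"
    "(osc ?m ?w (of_real clique_coeff_B) has_field_derivative
      - \<i> * (1 * osc ?m ?w (of_real clique_coeff_A) (of_real s)
              + (?m - ?d) * osc ?m ?w (of_real clique_coeff_B) (of_real s))) (at (of_real s))"
    by (blast intro: osc_pair_has_field_derivative)+
  have "clique_shift + clique_detuning = \<gamma>" "clique_shift - clique_detuning = real n - 2"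
    by (simp_all add: clique_shift_def clique_detuning_def field_simps)
  then have "?m + ?d = of_real \<gamma>" "?m - ?d = of_nat n - 2"
    by (metis of_real_add, metis of_real_diff of_real_of_nat_eq of_real_numeral)
  with osc show
    "((\<lambda>s. clique_A s) has_vector_derivative
      - \<i> * (of_real \<gamma> * clique_A s + (of_nat n - 1) * clique_B s)) (at s)"
    "((\<lambda>s. clique_B s) has_vector_derivative
      - \<i> * (clique_A s + (of_nat n - 2) * clique_B s)) (at s)"
    unfolding clique_A_def clique_B_def by (auto intro: has_vector_derivative_real_field)
qed

lemma Hmat_col_1: "H i 1 = (if i = 1 then of_real \<gamma> else if 2 \<le> i \<and> i \<le> n then 1 else 0)"
  using two_le_n by (auto simp: Hmat_def)

lemma sum_Hmat_clique_rest:
  "(\<Sum>l\<in>{2..n}. H i l) =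
     (if i = 1 then of_nat n - 1 else if 2 \<le> i \<and> i \<le> n then of_nat n - 2
      else if i = n + 1 then 1 else 0)"
proof -
  consider "i = 1" | "2 \<le> i \<and> i \<le> n" | "i = n + 1" | "i = 0 \<or> n + 1 < i"
    by linarith
  then show ?thesis
  proof cases
    case 1
    then have "(\<Sum>l\<in>{2..n}. H i l) = (\<Sum>l\<in>{2..n}. 1)"
      by (intro sum.cong) (auto simp: Hmat_def)
    then show ?thesis using 1 two_le_n by (simp add: of_nat_diff)
  next
    case 2
    then have "(\<Sum>l\<in>{2..n}. H i l) = (\<Sum>l\<in>{2..n} - {i}. 1)"
      by (intro sum.mono_neutral_cong_right) (auto simp: Hmat_def)
    then show ?thesis using 2 two_le_n by (simp add: of_nat_diff)
  next
    case 3
    then have "(\<Sum>l\<in>{2..n}. H i l) = (\<Sum>l\<in>{n}. 1)"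
      using two_le_n by (intro sum.mono_neutral_cong_right) (auto simp: Hmat_def)
    then show ?thesis using 3 two_le_n by simp
  next
    case 4
    then show ?thesis by (auto simp: Hmat_def intro!: sum.neutral)
  qed
qed

lemma sum_Htrunc_clique_state:
  assumes "n + 1 \<le> M"
  shows "(\<Sum>l\<le>M. Htrunc M i l * clique_state s l) =
    (if i = 1 then of_real \<gamma> * clique_A s + (of_nat n - 1) * clique_B s
     else if 2 \<le> i \<and> i \<le> n then clique_A s + (of_nat n - 2) * clique_B s
     else if i = n + 1 then clique_B s else 0)"
proof (cases "i \<le> M")
  case True
  have "(\<Sum>l\<le>M. Htrunc M i l * clique_state s l) = (\<Sum>l\<in>{1..n}. H i l * clique_state s l)"
    using assms True two_le_n
    by (intro sum.mono_neutral_cong_right) (auto simp: Htrunc_def clique_state_def)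
  also have "\<dots> = H i 1 * clique_A s + (\<Sum>l\<in>{2..n}. H i l) * clique_B s"
  proof -
    have "{1..n} = insert 1 {2..n}"
      using two_le_n by auto
    then show ?thesis
      by (simp add: clique_state_def sum_distrib_right)
  qed
  finally show ?thesis
    unfolding Hmat_col_1 sum_Hmat_clique_rest by simp
next
  case False
  with assms show ?thesis by (simp add: Htrunc_def)
qed

lemma clique_state_has_vector_derivative:
  assumes "n + 1 \<le> M"
  shows "((\<lambda>s. clique_state s i) has_vector_derivative
     - \<i> * (\<Sum>l\<le>M. Htrunc M i l * clique_state s l) + (if i = n + 1 then \<i> * clique_B s else 0)) (at s)"
proof -
  consider "i = 1" | "2 \<le> i \<and> i \<le> n" | "\<not> (1 \<le> i \<and> i \<le> n)"
    by linarith
  then show ?thesis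
  proof cases
    case 1
    then have "(\<lambda>s. clique_state s i) = clique_A"
      by (auto simp: clique_state_def)
    then show ?thesis
      using clique_A_B_has_vector_derivative(1)[of s] 1 assms two_le_n
      by (simp add: sum_Htrunc_clique_state)
  next
    case 2
    then have "(\<lambda>s. clique_state s i) = clique_B"
      by (auto simp: clique_state_def)
    then show ?thesis
      using clique_A_B_has_vector_derivative(2)[of s] 2 assms
      by (simp add: sum_Htrunc_clique_state)
  next
    case 3
    then have "(\<lambda>s. clique_state s i) = (\<lambda>s. 0)"
      using two_le_n by (auto simp: clique_state_def)
    moreover have "i \<noteq> 1" "\<not> (2 \<le> i \<and> i \<le> n)"
      using 3 two_le_n by auto
    ultimately show ?thesis
      using assms by (auto simp: sum_Htrunc_clique_state)
  qed
qed

definition trunc_error :: "nat \<Rightarrow> real \<Rightarrow> nat \<Rightarrow> complex" where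
  "trunc_error M s i = trunc_state M s i - clique_state s i"

lemma trunc_error_0: "trunc_error M 0 i = 0"
  using two_le_n by (simp add: trunc_error_def trunc_state_def clique_state_def clique_A_def clique_B_def clique_ind_def)

lemma trunc_error_has_vector_derivative:
  assumes "n + 1 \<le> M"
  shows "((\<lambda>s. trunc_error M s i) has_vector_derivative
     - \<i> * (\<Sum>l\<le>M. Htrunc M i l * trunc_error M s l) - (if i = n + 1 then \<i> * clique_B s else 0)) (at s)"
  using has_vector_derivative_diff[OF trunc_state_has_vector_derivative
      clique_state_has_vector_derivative[OF assms]]
  by (simp add: trunc_error_def[abs_def] sum_subtractf right_diff_distrib algebra_simps)

lemma clique_coeff_B_sq_le: "clique_coeff_B\<^sup>2 \<le> 2"
proof -
  have "(1 - clique_detuning)\<^sup>2 \<le> 2 * (clique_detuning\<^sup>2 + 1)"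
    using zero_le_power2[of "clique_detuning + 1"] by (simp add: power2_eq_square algebra_simps)
  also have "\<dots> \<le> 2 * clique_freq\<^sup>2"
    using two_le_n by (simp add: clique_freq_sq)
  finally show ?thesis
    using clique_freq_pos by (simp add: clique_coeff_B_def power_divide divide_le_eq)
qed

lemma norm_clique_B_sq_le: "(cmod (clique_B s))\<^sup>2 \<le> 3"
proof -
  have "(cos (clique_freq * s))\<^sup>2 \<le> 1"
    by (simp add: abs_square_le_1)
  moreover have "(clique_coeff_B * sin (clique_freq * s))\<^sup>2 \<le> 2 * 1"
    unfolding power_mult_distrib
    by (intro mult_mono clique_coeff_B_sq_le) (simp_all add: abs_square_le_1)
  ultimately show ?thesis
    unfolding clique_B_def norm_osc_of_real_sq by linarith
qed

lemma Htrunc_hermitian: "cnj (Htrunc M i l) = Htrunc M l i"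
  by (auto simp: Htrunc_def Hmat_def)

text \<open>As \<open>Htrunc\<close> is Hermitian, only the source \<open>\<i> clique_B\<close> at vertex \<open>n + 1\<close>
  changes the energy of the error.\<close>
lemma sum_norm_trunc_error_le:
  assumes "n + 1 \<le> M" "0 \<le> t"
  shows "(\<Sum>i\<le>M. (cmod (trunc_error M t i))\<^sup>2) \<le> 3 * (exp t - 1)"
proof -
  let ?N = "\<lambda>s. \<Sum>i\<le>M. (cmod (trunc_error M s i))\<^sup>2"
  let ?N' = "\<lambda>s. - 2 * Re (cnj (trunc_error M s (n + 1)) * (\<i> * clique_B s))"
  have "(?N has_real_derivative ?N' s) (at s)" for s
    using Htrunc_hermitian assms(1) trunc_error_has_vector_derivative[OF assms(1)]
    by (rule hermitian_system_norm_has_derivative)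
  moreover have "?N' s \<le> ?N s + 3" for s
  proof -
    have "(cmod (trunc_error M s (n + 1)))\<^sup>2 \<le> ?N s"
      using assms(1) by (intro member_le_sum) auto
    moreover have "(cmod (\<i> * clique_B s))\<^sup>2 \<le> 3"
      using norm_clique_B_sq_le by (simp add: norm_mult)
    ultimately show ?thesis
      using neg_two_Re_mult_le[of "cnj (trunc_error M s (n + 1))" "\<i> * clique_B s"] by simp
  qed
  ultimately show ?thesis
    using assms(2)
    by (intro DERIV_le_self_plus_const_imp_le[where f' = ?N']) (simp_all add: trunc_error_0)
qed

lemma norm_trunc_error_le:
  assumes "n + 1 \<le> M" "0 \<le> t"
  shows "cmod (trunc_error M t 1) \<le> sqrt (3 * (exp t - 1))"
proof (rule real_le_rsqrt)
  have "(cmod (trunc_error M t 1))\<^sup>2 \<le> (\<Sum>i\<le>M. (cmod (trunc_error M t i))\<^sup>2)"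
    using assms(1) by (intro member_le_sum) auto
  also have "\<dots> \<le> 3 * (exp t - 1)"
    by (rule sum_norm_trunc_error_le[OF assms])
  finally show "(cmod (trunc_error M t 1))\<^sup>2 \<le> 3 * (exp t - 1)" .
qed

lemma norm_clique_A_ge: "\<bar>clique_coeff_A * sin (clique_freq * t)\<bar> \<le> cmod (clique_A t)"
proof (rule power2_le_imp_le)
  show "\<bar>clique_coeff_A * sin (clique_freq * t)\<bar>\<^sup>2 \<le> (cmod (clique_A t))\<^sup>2"
    unfolding clique_A_def norm_osc_of_real_sq by simp
qed simp

lemma amplitude_lower_bound:
  assumes "0 \<le> t"
  shows "\<bar>clique_coeff_A * sin (clique_freq * t)\<bar> - sqrt (3 * (exp t - 1))
           \<le> sqrt (real n) * cmod (amplitude n \<gamma> t)"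
proof -
  let ?X = "expi_series (\<lambda>k. Hpow_clique k 1) t"
  have "\<bar>clique_coeff_A * sin (clique_freq * t)\<bar> - sqrt (3 * (exp t - 1)) \<le> cmod ?X + \<epsilon>"
    if "\<epsilon> > 0" for \<epsilon>
  proof -
    obtain M where M: "n + 1 \<le> M" and approx: "cmod (?X - trunc_state M t 1) \<le> \<epsilon>"
      using trunc_state_approx[OF \<open>\<epsilon> > 0\<close>] by blast
    have split: "clique_A t = ?X - (?X - trunc_state M t 1) - trunc_error M t 1"
      by (simp add: trunc_error_def clique_state_def)
    have "cmod (clique_A t) \<le> cmod ?X + cmod (?X - trunc_state M t 1) + cmod (trunc_error M t 1)"
      unfolding split
      using norm_triangle_ineq4[of "?X - (?X - trunc_state M t 1)" "trunc_error M t 1"]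
        norm_triangle_ineq4[of ?X "?X - trunc_state M t 1"] by linarith
    then show ?thesis
      using norm_clique_A_ge[of t] approx norm_trunc_error_le[OF M assms] by linarith
  qed
  then have "\<bar>clique_coeff_A * sin (clique_freq * t)\<bar> - sqrt (3 * (exp t - 1)) \<le> cmod ?X"
    by (rule field_le_epsilon)
  also have "cmod ?X = sqrt (real n) * cmod (amplitude n \<gamma> t)"
    using two_le_n by (simp add: amplitude_eq_expi_series norm_mult norm_divide)
  finally show ?thesis .
qed

lemma amplitude_at_quarter_period_ge:
  assumes \<gamma>: "\<bar>\<gamma> - real n\<bar> \<le> B" and large: "10000 \<le> real n" "(B + 2)\<^sup>2 \<le> real n"
  shows "1 / 10 \<le> cmod (amplitude n \<gamma> (pi / (2 * sqrt (real n))))"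
proof -
  define sn where "sn = sqrt (real n)"
  define t where "t = pi / (2 * sn)"
  let ?d = clique_detuning and ?w = clique_freq and ?p = clique_coeff_A
  have sn_sq: "sn\<^sup>2 = real n"
    by (simp add: sn_def)
  have sn_ge: "100 \<le> sn"
    unfolding sn_def using large(1) by (intro real_le_rsqrt) simp
  have t: "0 \<le> t" "t \<le> 1"
    using sn_ge pi_less_4 by (simp_all add: t_def field_simps)
  have "B + 2 \<le> sn"
    unfolding sn_def using large(2) \<gamma> by (intro real_le_rsqrt) auto
  then have d: "\<bar>?d\<bar> \<le> sn / 2"
    using \<gamma> by (simp add: clique_detuning_def abs_le_iff)
  then have d_sq: "?d\<^sup>2 \<le> real n / 4"
    using abs_le_square_iff[of ?d "sn / 2"] sn_ge by (simp add: power_divide sn_sq)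
  have w_ge: "sn / 2 \<le> ?w"
  proof (rule power2_le_imp_le)
    have "(sn / 2)\<^sup>2 = real n / 4"
      by (simp add: power_divide sn_sq)
    then show "(sn / 2)\<^sup>2 \<le> ?w\<^sup>2"
      using large(1) zero_le_power2[of ?d] clique_freq_sq by linarith
  qed (use clique_freq_pos in simp)
  have w_le: "?w \<le> 3 * sn / 2"
  proof (rule power2_le_imp_le)
    show "?w\<^sup>2 \<le> (3 * sn / 2)\<^sup>2"
      using d_sq by (simp add: clique_freq_sq power_divide power_mult_distrib sn_sq)
  qed (use sn_ge in simp)
  have ratio: "1 / 2 \<le> ?w / sn" "?w / sn \<le> 3 / 2"
    using w_ge w_le sn_ge by (simp_all add: field_simps)
  have "pi / 2 * (1 / 2) \<le> pi / 2 * (?w / sn)" "pi / 2 * (?w / sn) \<le> pi / 2 * (3 / 2)"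
    by (rule mult_left_mono[OF ratio(1)], simp, rule mult_left_mono[OF ratio(2)], simp)
  moreover have "?w * t = pi / 2 * (?w / sn)"
    using sn_ge by (simp add: t_def)
  ultimately have sin: "1 / 2 \<le> sin (?w * t)"
    using pi_gt_zero by (intro sin_ge_half) linarith+
  have "100 * sn \<le> sn * sn"
    using sn_ge by (intro mult_right_mono) auto
  then have num: "real n / 2 \<le> ?d + real n - 1"
    using d sn_sq sn_ge unfolding power2_eq_square abs_le_iff by linarith
  have "sn / 3 = (real n / 2) / (3 * sn / 2)"
    using sn_ge by (simp add: sn_sq[symmetric] power2_eq_square)
  also have "\<dots> \<le> (?d + real n - 1) / ?w"
    by (rule frac_le) (use num w_le clique_freq_pos large(1) in linarith)+
  finally have p: "sn / 3 \<le> ?p"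
    by (simp add: clique_coeff_A_def)
  have "sn / 3 * (1 / 2) \<le> \<bar>?p * sin (?w * t)\<bar>"
    using mult_mono[OF p sin] sn_ge p by linarith
  moreover have "sqrt (3 * (exp t - 1)) \<le> 3"
  proof (rule real_sqrt_le_iff[THEN iffD2, THEN order_trans])
    show "3 * (exp t - 1) \<le> 3\<^sup>2"
      using exp_le order_trans[OF exp_mono[OF t(2)]] by simp
  qed simp
  ultimately have "sn * (1 / 10) \<le> sn * cmod (amplitude n \<gamma> t)"
    using amplitude_lower_bound[OF t(1)] sn_ge unfolding sn_def by linarith
  then have "1 / 10 \<le> cmod (amplitude n \<gamma> t)"
    using sn_ge by (simp only: mult_le_cancel_left_pos)
  then show ?thesis
    by (simp add: t_def sn_def)
qed

end

theorem theorem1: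
  fixes \<gamma> :: "nat \<Rightarrow> real"
  assumes "\<exists>B. \<forall>n\<ge>2. \<bar>\<gamma> n - real n\<bar> \<le> B"
  shows "\<exists>c>0. \<exists>N\<ge>2. \<forall>n\<ge>N.
           c \<le> cmod (amplitude n (\<gamma> n) (pi / (2 * sqrt (real n))))"
proof -
  obtain B where B: "\<And>n. 2 \<le> n \<Longrightarrow> \<bar>\<gamma> n - real n\<bar> \<le> B"
    using assms by blast
  define N where "N = 10000 + nat \<lceil>(B + 2)\<^sup>2\<rceil>"
  have "1 / 10 \<le> cmod (amplitude n (\<gamma> n) (pi / (2 * sqrt (real n))))" if "N \<le> n" for n
  proof -
    have large: "10000 \<le> real n" "(B + 2)\<^sup>2 \<le> real n"
      using that unfolding N_def by linarith+
    then have "2 \<le> n"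
      by simp
    then interpret loop_clique n "\<gamma> n"
      by unfold_locales
    show ?thesis
      using amplitude_at_quarter_period_ge[OF B[OF \<open>2 \<le> n\<close>] large] .
  qed
  moreover have "2 \<le> N"
    by (simp add: N_def)
  ultimately show ?thesis
    by (intro exI[of _ "1 / 10"] conjI exI[of _ N]) auto
qed

end
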